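(* Let $F$ be an arbitrary formal group law over $R$. For every $w\in W$ and every reduced word $I_w=(i_1,\dots,i_l)$ of $w$ we have in $Q_W$ $$\mathrm{ev}(\mathcal R^X_{I_w})=\delta_w,\qquad \mathrm{ev}(\mathcal R^Y_{I_w})=\theta_{I_w}\,\delta_w,$$ where $\theta_{I_w}:=\prod_{k=1}^{l}\theta(\beta_k)$ and $\theta(\lambda):=-\frac{x_{-\lambda}}{x_\lambda}$. Moreover $\theta_{I_w}$ depends only on $w$ and not on the choice of the reduced word $I_w$.
   Context: Let $R$ be a commutative ring and $F(x,y)\in R[[x,y]]$ a one-dimensional commutative formal group law over $R$. Let $\Phi$ be a finite (crystallographic, reduced) root system with weight lattice $\Lambda$, positive roots $\Phi^+$, negative roots $\Phi^-=-\Phi^+$, simple roots $\alpha_1,\dots,\alpha_n$, simple coroots $\alpha_i^\vee$, simple reflections $s_1,\dots,s_n$, Weyl group $W$ with length function $\ell$, Bruhat order $\le$ and longest element $w_\circ$; $m_{ij}$ denotes the order of $s_is_j$. The formal group algebra is $S=R[[y_\lambda]]_{\lambda\in\Lambda}/(y_0,\;y_{\lambda+\nu}-F(y_\lambda,y_\nu))$, on which $W$ acts by $w(y_\lambda)=y_{w\lambda}$. Whenever only one copy of $S$ is involved its generators are also written $x_\lambda:=y_\lambda$. Let $Q$ be the localization of $S$ at all $x_\alpha$, $\alpha\in\Phi$, and let $Q_W=Q\otimes_R R[W]$ be the twisted group algebra, a free left $Q$-module with basis $\{\delta_w\}_{w\in W}$ and multiplication $q\delta_w\cdot q'\delta_{w'}=q\,w(q')\,\delta_{ww'}$.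 Write $\delta_i=\delta_{s_i}$ and $x_{\pm i}=x_{\pm\alpha_i}$, and define the Demazure and push-pull elements $X_i=\frac{1}{x_i}(\delta_i-1)$ and $Y_i=\frac{1}{x_{-i}}+\frac{1}{x_i}\delta_i$ of $Q_W$. For a sequence $I=(i_1,\dots,i_l)$ set $X_I=X_{i_1}\cdots X_{i_l}$ and $Y_I=Y_{i_1}\cdots Y_{i_l}$. Let $Q_W[[\Lambda]]_F:=S\otimes_R Q_W$, where the generators of the left factor $S$ are written $y_\lambda$ and commute with all of $Q_W$ (whose coefficients are written in the variables $x_\lambda$); it is a left module over $S\otimes_R Q$. For $i\in\{1,\dots,n\}$ and $\lambda\in\Lambda$ set $h_i^Y(\lambda)=1-y_\lambda Y_i$ and $h_i^X(\lambda)=1+y_{-\lambda}X_i$. For $w\in W$ and a reduced word $I_w=(i_1,\dots,i_l)$ of $w$ (so $w=s_{i_1}\cdots s_{i_l}$, $l=\ell(w)$) let $\beta_k=s_{i_1}\cdots s_{i_{k-1}}\alpha_{i_k}$, $k=1,\dots,l$ (these are the elements of $\Phi^+\cap w\Phi^-$), and define the formal root polynomials $\mathcal R^Y_{I_w}=h^Y_{i_1}(\beta_1)h^Y_{i_2}(\beta_2)\cdots h^Y_{i_l}(\beta_l)$ and $\mathcal R^X_{I_w}=h^X_{i_1}(\beta_1)\cdots h^X_{i_l}(\beta_l)$ (products in this order). The evaluation map $\mathrm{ev}$ is the ring homomorphism $S\otimes_R Q\to Q$ with $y_\lambda\otimes 1\mapsto x_{-\lambda}$ and identity on $Q$, extended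 to the homomorphism of left $S\otimes_R Q$-modules $\mathrm{ev}:Q_W[[\Lambda]]_F\to Q_W$ (which fixes each element of $Q_W$ and sends $y_\lambda$ to $x_{-\lambda}$). *)

theory Defs
  imports "HOL-Analysis.Analysis" "HOL-Library.Multiset"
begin

definition refl :: "'v::euclidean_space \<Rightarrow> 'v \<Rightarrow> 'v" where
  "refl a v = v - (2 * (v \<bullet> a) / (a \<bullet> a)) *\<^sub>R a"

definition root_system :: "'v::euclidean_space set \<Rightarrow> bool" where
  "root_system Phi \<longleftrightarrow> finite Phi \<and> 0 \<notin> Phi \<and> span Phi = UNIV
     \<and> (\<forall>a\<in>Phi. \<forall>b\<in>Phi. refl a b \<in> Phi)
     \<and> (\<forall>a\<in>Phi. \<forall>b\<in>Phi. 2 * (b \<bullet> a) / (a \<bullet> a) \<in> \<int>)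
     \<and> (\<forall>a\<in>Phi. \<forall>c::real. c *\<^sub>R a \<in> Phi \<longrightarrow> c = 1 \<or> c = -1)"

definition simple_roots :: "'v::euclidean_space set \<Rightarrow> nat \<Rightarrow> (nat \<Rightarrow> 'v) \<Rightarrow> bool" where
  "simple_roots Phi n alpha \<longleftrightarrow> (\<forall>i<n. alpha i \<in> Phi) \<and> inj_on alpha {..<n}
     \<and> independent (alpha ` {..<n})
     \<and> (\<forall>b\<in>Phi. \<exists>c::nat \<Rightarrow> int. b = (\<Sum>i<n. of_int (c i) *\<^sub>R alpha i)
            \<and> ((\<forall>i<n. c i \<ge> 0) \<or> (\<forall>i<n. c i \<le> 0)))"

inductive_set weyl_group :: "'v::euclidean_space set \<Rightarrow> ('v \<Rightarrow> 'v) set" for Phi where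
  id_in: "id \<in> weyl_group Phi"
| refl_in: "a \<in> Phi \<Longrightarrow> w \<in> weyl_group Phi \<Longrightarrow> refl a \<circ> w \<in> weyl_group Phi"

definition weight_lattice :: "nat \<Rightarrow> (nat \<Rightarrow> 'v::euclidean_space) \<Rightarrow> 'v set" where
  "weight_lattice n alpha = {l. \<forall>i<n. 2 * (l \<bullet> alpha i) / (alpha i \<bullet> alpha i) \<in> \<int>}"

definition word_elt :: "(nat \<Rightarrow> 'v::euclidean_space) \<Rightarrow> nat list \<Rightarrow> 'v \<Rightarrow> 'v" where
  "word_elt alpha I = foldr (\<lambda>i f. refl (alpha i) \<circ> f) I id"

definition reduced_word :: "nat \<Rightarrow> (nat \<Rightarrow> 'v::euclidean_space) \<Rightarrow> ('v \<Rightarrow> 'v) \<Rightarrow> nat list \<Rightarrow> bool" where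
  "reduced_word n alpha w I \<longleftrightarrow> set I \<subseteq> {..<n} \<and> word_elt alpha I = w
     \<and> (\<forall>J. set J \<subseteq> {..<n} \<and> word_elt alpha J = w \<longrightarrow> length I \<le> length J)"

text \<open>beta_{k+1} = s_{i_1} ... s_{i_k} alpha_{i_{k+1}} (0-indexed k).\<close>
definition beta :: "(nat \<Rightarrow> 'v::euclidean_space) \<Rightarrow> nat list \<Rightarrow> nat \<Rightarrow> 'v" where
  "beta alpha I k = word_elt alpha (take k I) (alpha (I ! k))"

definition uinv :: "'q::comm_ring_1 \<Rightarrow> 'q" where
  "uinv a = (SOME b. a * b = 1)"

definition weyl_action :: "'v::euclidean_space set \<Rightarrow> (('v \<Rightarrow> 'v) \<Rightarrow> 'q::comm_ring_1 \<Rightarrow> 'q) \<Rightarrow> bool" where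
  "weyl_action Phi act \<longleftrightarrow> act id = id
     \<and> (\<forall>w\<in>weyl_group Phi. \<forall>v\<in>weyl_group Phi. act (w \<circ> v) = act w \<circ> act v)
     \<and> (\<forall>w\<in>weyl_group Phi. bij (act w) \<and> act w 1 = 1
          \<and> (\<forall>a b. act w (a + b) = act w a + act w b \<and> act w (a * b) = act w a * act w b))"

definition admissible_x :: "'v::euclidean_space set \<Rightarrow> nat \<Rightarrow> (nat \<Rightarrow> 'v)
     \<Rightarrow> (('v \<Rightarrow> 'v) \<Rightarrow> 'q::comm_ring_1 \<Rightarrow> 'q) \<Rightarrow> ('v \<Rightarrow> 'q) \<Rightarrow> bool" where
  "admissible_x Phi n alpha act x \<longleftrightarrow>
     (\<forall>w\<in>weyl_group Phi. \<forall>l\<in>weight_lattice n alpha. act w (x l) = x (w l))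
     \<and> (\<forall>a\<in>Phi. \<exists>b. x a * b = 1)"

definition theta :: "('v \<Rightarrow> 'q::comm_ring_1) \<Rightarrow> 'v::uminus \<Rightarrow> 'q" where
  "theta x l = - (x (- l) * uinv (x l))"

definition theta_word :: "('v::euclidean_space \<Rightarrow> 'q::comm_ring_1) \<Rightarrow> (nat \<Rightarrow> 'v) \<Rightarrow> nat list \<Rightarrow> 'q" where
  "theta_word x alpha I = (\<Prod>k<length I. theta x (beta alpha I k))"

text \<open>An element sum_w q_w delta_w of Q_W is represented by the coefficient function w \<mapsto> q_w
  (zero outside W).\<close>
type_synonym ('v, 'q) qw = "('v \<Rightarrow> 'v) \<Rightarrow> 'q"

definition delta :: "('v \<Rightarrow> 'v) \<Rightarrow> ('v, 'q::comm_ring_1) qw" where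
  "delta w = (\<lambda>u. if u = w then 1 else 0)"

definition scal :: "'q::comm_ring_1 \<Rightarrow> ('v, 'q) qw \<Rightarrow> ('v, 'q) qw" where
  "scal q f = (\<lambda>u. q * f u)"

definition qw_mult :: "'v::euclidean_space set \<Rightarrow> (('v \<Rightarrow> 'v) \<Rightarrow> 'q::comm_ring_1 \<Rightarrow> 'q)
     \<Rightarrow> ('v, 'q) qw \<Rightarrow> ('v, 'q) qw \<Rightarrow> ('v, 'q) qw" where
  "qw_mult Phi act f g = (\<lambda>u. \<Sum>w\<in>weyl_group Phi. \<Sum>v\<in>weyl_group Phi.
       if w \<circ> v = u then f w * act w (g v) else 0)"

definition demX :: "(nat \<Rightarrow> 'v::euclidean_space) \<Rightarrow> ('v \<Rightarrow> 'q::comm_ring_1) \<Rightarrow> nat \<Rightarrow> ('v, 'q) qw" where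
  "demX alpha x i = scal (uinv (x (alpha i))) (\<lambda>u. delta (refl (alpha i)) u - delta id u)"

definition ppY :: "(nat \<Rightarrow> 'v::euclidean_space) \<Rightarrow> ('v \<Rightarrow> 'q::comm_ring_1) \<Rightarrow> nat \<Rightarrow> ('v, 'q) qw" where
  "ppY alpha x i = (\<lambda>u. uinv (x (- alpha i)) * delta id u + uinv (x (alpha i)) * delta (refl (alpha i)) u)"

text \<open>An element is represented as a formal finite sum (list) of pure tensors
  y^m \<otimes> a, where m is a finite multiset of weights (the monomial prod_{mu in m} y_mu)
  and a is in Q_W. The y's commute with everything.\<close>
type_synonym ('v, 'q) qwl = "('v multiset \<times> ('v, 'q) qw) list"

definition tmult :: "'v::euclidean_space set \<Rightarrow> (('v \<Rightarrow> 'v) \<Rightarrow> 'q::comm_ring_1 \<Rightarrow> 'q)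
     \<Rightarrow> ('v, 'q) qwl \<Rightarrow> ('v, 'q) qwl \<Rightarrow> ('v, 'q) qwl" where
  "tmult Phi act A B = [(fst a + fst b, qw_mult Phi act (snd a) (snd b)). a \<leftarrow> A, b \<leftarrow> B]"

definition tprod :: "'v::euclidean_space set \<Rightarrow> (('v \<Rightarrow> 'v) \<Rightarrow> 'q::comm_ring_1 \<Rightarrow> 'q)
     \<Rightarrow> ('v, 'q) qwl list \<Rightarrow> ('v, 'q) qwl" where
  "tprod Phi act As = foldr (tmult Phi act) As [({#}, delta id)]"

text \<open>h^Y_i(l) = 1 - y_l Y_i and h^X_i(l) = 1 + y_{-l} X_i.\<close>
definition hY :: "(nat \<Rightarrow> 'v::euclidean_space) \<Rightarrow> ('v \<Rightarrow> 'q::comm_ring_1) \<Rightarrow> nat \<Rightarrow> 'v \<Rightarrow> ('v, 'q) qwl" where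
  "hY alpha x i l = [({#}, delta id), ({#l#}, (\<lambda>u. - ppY alpha x i u))]"

definition hX :: "(nat \<Rightarrow> 'v::euclidean_space) \<Rightarrow> ('v \<Rightarrow> 'q::comm_ring_1) \<Rightarrow> nat \<Rightarrow> 'v \<Rightarrow> ('v, 'q) qwl" where
  "hX alpha x i l = [({#}, delta id), ({#- l#}, demX alpha x i)]"

definition root_polyY :: "'v::euclidean_space set \<Rightarrow> (nat \<Rightarrow> 'v) \<Rightarrow> (('v \<Rightarrow> 'v) \<Rightarrow> 'q::comm_ring_1 \<Rightarrow> 'q)
     \<Rightarrow> ('v \<Rightarrow> 'q) \<Rightarrow> nat list \<Rightarrow> ('v, 'q) qwl" where
  "root_polyY Phi alpha act x I = tprod Phi act [hY alpha x (I ! k) (beta alpha I k). k \<leftarrow> [0..<length I]]"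

definition root_polyX :: "'v::euclidean_space set \<Rightarrow> (nat \<Rightarrow> 'v) \<Rightarrow> (('v \<Rightarrow> 'v) \<Rightarrow> 'q::comm_ring_1 \<Rightarrow> 'q)
     \<Rightarrow> ('v \<Rightarrow> 'q) \<Rightarrow> nat list \<Rightarrow> ('v, 'q) qwl" where
  "root_polyX Phi alpha act x I = tprod Phi act [hX alpha x (I ! k) (beta alpha I k). k \<leftarrow> [0..<length I]]"

definition ev :: "('v::uminus \<Rightarrow> 'q::comm_ring_1) \<Rightarrow> ('v, 'q) qwl \<Rightarrow> ('v, 'q) qw" where
  "ev x A = (\<lambda>u. \<Sum>p\<leftarrow>A. (\<Prod>mu\<in>#fst p. x (- mu)) * snd p u)"

end

theory Submission
  imports Defs
begin

(*
  Write I = i # J and s = s_i.  Then beta_0 = alpha_i and beta_{k+1} = s (beta_k(J)), so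
  R_{i#J} = h_i(alpha_i) * s(R_J), where s acts on the monomial part of S (x) Q_W.  Because ev
  is W-equivariant on monomials in roots, the two terms of h_i(alpha_i) recombine into a left
  multiplication by delta_s:  ev (h^X_i(alpha_i) s(A)) = delta_s ev A  and
  ev (h^Y_i(alpha_i) s(A)) = theta(alpha_i) delta_s ev A.

  Independence of theta_I: theta_I equals the product of theta over the inversion set
  Phi+ \<inter> w Phi- of w = s_I; this follows from the cocycle rule for s_i w, which rests on the
  classical fact that s_i permutes Phi+ - {alpha_i} and sends alpha_i to -alpha_i.
*)

lemma refl_linear: "linear (refl a)"
  unfolding refl_def
  by (rule linearI) (auto simp: inner_add_left add_divide_distrib algebra_simps inner_scaleR_left)

lemma refl_neg: "refl a (- v) = - refl a v"
  using linear_neg[OF refl_linear] by blast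

lemma refl_refl: "a \<noteq> 0 \<Longrightarrow> refl a (refl a v) = v"
  unfolding refl_def by (simp add: inner_diff_left inner_scaleR_left algebra_simps)

lemma refl_self: "a \<noteq> 0 \<Longrightarrow> refl a a = - a"
  unfolding refl_def by (simp add: algebra_simps scaleR_2)

lemma refl_inj: "a \<noteq> 0 \<Longrightarrow> inj (refl a)"
  by (metis injI refl_refl)

lemma uinv_right: "a * b = 1 \<Longrightarrow> a * uinv a = 1"
  unfolding uinv_def by (rule someI)

lemma uinv_unique: "a * b = (1::'a::comm_ring_1) \<Longrightarrow> uinv a = b"
proof -
  assume ab: "a * b = 1"
  have "uinv a = uinv a * (a * b)" using ab by simp
  also have "\<dots> = (a * uinv a) * b" by (simp add: algebra_simps)
  also have "\<dots> = b" using uinv_right[OF ab] by simp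
  finally show ?thesis .
qed

locale weyl_setting =
  fixes Phi :: "'v::euclidean_space set" and n :: nat and alpha :: "nat \<Rightarrow> 'v"
    and act :: "('v \<Rightarrow> 'v) \<Rightarrow> 'q::comm_ring_1 \<Rightarrow> 'q" and x :: "'v \<Rightarrow> 'q"
  assumes root_system: "root_system Phi" and simple: "simple_roots Phi n alpha"
    and action: "weyl_action Phi act" and admissible: "admissible_x Phi n alpha act x"
begin

abbreviation W :: "('v \<Rightarrow> 'v) set" where "W \<equiv> weyl_group Phi"

lemma roots_finite: "finite Phi" and zero_not_root: "0 \<notin> Phi"
  and roots_span: "span Phi = UNIV"
  and refl_root: "a \<in> Phi \<Longrightarrow> b \<in> Phi \<Longrightarrow> refl a b \<in> Phi"
  and cartan_int: "a \<in> Phi \<Longrightarrow> b \<in> Phi \<Longrightarrow> 2 * (b \<bullet> a) / (a \<bullet> a) \<in> \<int>"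
  and roots_reduced: "a \<in> Phi \<Longrightarrow> c *\<^sub>R a \<in> Phi \<Longrightarrow> c = 1 \<or> c = -1"
  using root_system unfolding root_system_def by auto

lemma neg_root: "a \<in> Phi \<Longrightarrow> - a \<in> Phi"
  using refl_root[of a a] refl_self[of a] zero_not_root by (cases "a = 0") auto

lemma refl_permutes_roots: "a \<in> Phi \<Longrightarrow> refl a ` Phi = Phi"
proof
  assume a: "a \<in> Phi"
  then show "refl a ` Phi \<subseteq> Phi" using refl_root by auto
  show "Phi \<subseteq> refl a ` Phi"
  proof
    fix b assume "b \<in> Phi"
    then have "refl a b \<in> Phi" using refl_root a by auto
    then show "b \<in> refl a ` Phi"
      using refl_refl[of a b] a zero_not_root by (metis imageI)
  qed
qed

lemma weyl_props: "w \<in> W \<Longrightarrow> linear w \<and> inj w \<and> w ` Phi = Phi"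
proof (induction rule: weyl_group.induct)
  case id_in then show ?case using linear_id by (simp add: id_def)
next
  case (refl_in a w)
  have "a \<noteq> 0" using refl_in zero_not_root by auto
  then show ?case
    using refl_in linear_compose[of w "refl a"] refl_linear[of a]
      inj_compose[OF refl_inj] refl_permutes_roots[of a]
    by (metis image_comp)
qed

lemma weyl_root: "w \<in> W \<Longrightarrow> b \<in> Phi \<Longrightarrow> w b \<in> Phi"
  using weyl_props by blast

lemma weyl_neg: "w \<in> W \<Longrightarrow> w (- b) = - w b"
  using weyl_props linear_neg by blast

lemma weyl_comp: "w \<in> W \<Longrightarrow> v \<in> W \<Longrightarrow> w \<circ> v \<in> W"
  by (induction rule: weyl_group.induct) (auto simp: comp_assoc intro: weyl_group.intros)

lemma refl_in_weyl: "a \<in> Phi \<Longrightarrow> refl a \<in> W"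
  using weyl_group.refl_in[OF _ weyl_group.id_in, of a Phi] by simp

(* An element of W is determined by its restriction to the (spanning) finite set of roots. *)
lemma weyl_finite: "finite W"
proof (rule inj_on_finite[where f="\<lambda>w. restrict w Phi" and B="Phi \<rightarrow>\<^sub>E Phi"])
  show "inj_on (\<lambda>w. restrict w Phi) W"
  proof (rule inj_onI)
    fix w v assume w: "w \<in> W" and v: "v \<in> W" and eq: "restrict w Phi = restrict v Phi"
    have "\<forall>b\<in>Phi. w b = v b" using eq by (metis restrict_apply')
    then show "w = v"
      using weyl_props[OF w] weyl_props[OF v] linear_eq_on_span[of w v Phi] roots_span by auto
  qed
  show "(\<lambda>w. restrict w Phi) ` W \<subseteq> Phi \<rightarrow>\<^sub>E Phi" using weyl_props by (force simp: PiE_iff)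
  show "finite (Phi \<rightarrow>\<^sub>E Phi)" using roots_finite by (simp add: finite_PiE)
qed

lemma simple_root: "i < n \<Longrightarrow> alpha i \<in> Phi" and simple_inj: "inj_on alpha {..<n}"
  and simple_indep: "independent (alpha ` {..<n})"
  and root_decomp: "b \<in> Phi \<Longrightarrow> \<exists>c::nat \<Rightarrow> int. b = (\<Sum>i<n. of_int (c i) *\<^sub>R alpha i)
            \<and> ((\<forall>i<n. c i \<ge> 0) \<or> (\<forall>i<n. c i \<le> 0))"
  using simple unfolding simple_roots_def by auto

lemma simple_refl_in_weyl: "i < n \<Longrightarrow> refl (alpha i) \<in> W"
  using refl_in_weyl[OF simple_root] .

lemma word_elt_Nil: "word_elt alpha [] = id"
  unfolding word_elt_def by simp

lemma word_elt_Cons: "word_elt alpha (i # I) = refl (alpha i) \<circ> word_elt alpha I"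
  unfolding word_elt_def by simp

lemma word_elt_weyl: "set I \<subseteq> {..<n} \<Longrightarrow> word_elt alpha I \<in> W"
  by (induction I) (auto simp: word_elt_Nil word_elt_Cons weyl_group.id_in
      intro!: weyl_group.refl_in simple_root)

lemma beta_0: "beta alpha (i # I) 0 = alpha i"
  unfolding beta_def by (simp add: word_elt_Nil)

lemma beta_Suc: "beta alpha (i # I) (Suc k) = refl (alpha i) (beta alpha I k)"
  unfolding beta_def by (simp add: word_elt_Cons)

lemma beta_root: "set I \<subseteq> {..<n} \<Longrightarrow> k < length I \<Longrightarrow> beta alpha I k \<in> Phi"
  unfolding beta_def
  by (meson lessThan_iff nth_mem order.trans set_take_subset simple_root subsetD
      weyl_root word_elt_weyl)

lemma simple_coords_unique:
  assumes "(\<Sum>i<n. r i *\<^sub>R alpha i) = (\<Sum>i<n. s i *\<^sub>R alpha i)" "i < n" shows "r i = s i"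
proof -
  define u where "u v = r (the_inv_into {..<n} alpha v) - s (the_inv_into {..<n} alpha v)" for v
  have "(\<Sum>v\<in>alpha ` {..<n}. u v *\<^sub>R v) = (\<Sum>i<n. u (alpha i) *\<^sub>R alpha i)"
    by (rule sum.reindex[OF simple_inj, unfolded comp_def])
  also have "\<dots> = (\<Sum>i<n. r i *\<^sub>R alpha i) - (\<Sum>i<n. s i *\<^sub>R alpha i)"
    by (simp add: u_def the_inv_into_f_f[OF simple_inj] scaleR_diff_left sum_subtractf)
  finally have "(\<Sum>v\<in>alpha ` {..<n}. u v *\<^sub>R v) = 0" using assms by simp
  then have "u (alpha i) = 0"
    using independentD[OF simple_indep, of "alpha ` {..<n}" u "alpha i"] assms by auto
  then show ?thesis by (simp add: u_def the_inv_into_f_f[OF simple_inj] assms)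
qed

definition Pos :: "'v set" where
  "Pos = {b\<in>Phi. \<exists>c::nat\<Rightarrow>int. b = (\<Sum>i<n. of_int (c i) *\<^sub>R alpha i) \<and> (\<forall>i<n. c i \<ge> 0)}"

definition Neg :: "'v set" where
  "Neg = {b\<in>Phi. \<exists>c::nat\<Rightarrow>int. b = (\<Sum>i<n. of_int (c i) *\<^sub>R alpha i) \<and> (\<forall>i<n. c i \<le> 0)}"

lemma Pos_roots: "Pos \<subseteq> Phi"
  unfolding Pos_def by auto

lemma roots_Pos_Neg: "Phi = Pos \<union> Neg"
  using root_decomp unfolding Pos_def Neg_def by blast

lemma Pos_Neg_disjoint: "Pos \<inter> Neg = {}"
proof (intro equals0I)
  fix b assume "b \<in> Pos \<inter> Neg"
  then obtain c d where b: "b \<in> Phi"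
    and c: "b = (\<Sum>i<n. of_int (c i) *\<^sub>R alpha i)" "\<forall>i<n. c i \<ge> (0::int)"
    and d: "b = (\<Sum>i<n. of_int (d i) *\<^sub>R alpha i)" "\<forall>i<n. d i \<le> (0::int)"
    unfolding Pos_def Neg_def by blast
  have "c i = d i" if "i < n" for i
    using simple_coords_unique[of "\<lambda>i. of_int (c i)" "\<lambda>i. of_int (d i)", OF _ that] c d by simp
  then have "\<forall>i<n. c i = 0" using c(2) d(2) by (metis order_antisym)
  then show False using b c zero_not_root by simp
qed

lemma neg_Pos: "b \<in> Pos \<Longrightarrow> - b \<in> Neg" and neg_Neg: "b \<in> Neg \<Longrightarrow> - b \<in> Pos"
  unfolding Pos_def Neg_def
  by (force simp: sum_negf neg_root intro!: exI[of _ "\<lambda>i. - _ i"])+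

lemma simple_Pos: "i < n \<Longrightarrow> alpha i \<in> Pos"
proof -
  assume i: "i < n"
  have "(\<Sum>j<n. of_int (if j = i then 1 else 0) *\<^sub>R alpha j) = (\<Sum>j<n. if j = i then alpha j else 0)"
    by (rule sum.cong) auto
  then have "alpha i = (\<Sum>j<n. of_int (if j = i then 1 else 0) *\<^sub>R alpha j)" using i by simp
  then show ?thesis using simple_root[OF i] unfolding Pos_def
    by (intro CollectI conjI exI[of _ "\<lambda>j. if j = i then 1 else 0"]) auto
qed

lemma Pos_of_positive_coord:
  assumes b: "b \<in> Phi" and c: "b = (\<Sum>j<n. of_int (c j) *\<^sub>R alpha j)" and j: "j < n" "c j > 0"
  shows "b \<in> Pos"
proof -
  obtain d where d: "b = (\<Sum>j<n. of_int (d j) *\<^sub>R alpha j)" "(\<forall>j<n. d j \<ge> 0) \<or> (\<forall>j<n. d j \<le> 0)"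
    using root_decomp[OF b] by blast
  have "d j = c j" using simple_coords_unique[of "\<lambda>j. of_int (d j)" "\<lambda>j. of_int (c j)"] c d j by simp
  then have "\<forall>j<n. d j \<ge> 0" using d(2) j by force
  then show ?thesis using b d(1) unfolding Pos_def by blast
qed

(* By reducedness, a positive root other than alpha_i involves another simple root. *)
lemma Pos_other_coord:
  assumes i: "i < n" and b: "b \<in> Phi" "b \<noteq> alpha i"
    and c: "b = (\<Sum>j<n. of_int (c j) *\<^sub>R alpha j)" "\<forall>j<n. c j \<ge> 0"
  shows "\<exists>j<n. j \<noteq> i \<and> c j > 0"
proof (rule ccontr)
  assume "\<not> ?thesis"
  then have zero: "\<forall>j<n. j \<noteq> i \<longrightarrow> c j = 0" using c(2) by force
  have "b = (\<Sum>j<n. if j = i then of_int (c i) *\<^sub>R alpha j else 0)"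
    unfolding c(1) by (rule sum.cong) (auto simp: zero)
  also have "\<dots> = of_int (c i) *\<^sub>R alpha i" using i by simp
  finally have bc: "b = of_int (c i) *\<^sub>R alpha i" .
  then have "real_of_int (c i) = 1 \<or> real_of_int (c i) = -1"
    using roots_reduced[OF simple_root[OF i]] b by blast
  then have "c i = 1" using c(2) i by auto
  then show False using bc b by simp
qed

lemma refl_simple_coords:
  assumes i: "i < n" and b: "b \<in> Phi" and c: "b = (\<Sum>j<n. of_int (c j) *\<^sub>R alpha j)"
  shows "\<exists>k::int. refl (alpha i) b = (\<Sum>j<n. of_int (c j - (if j = i then k else 0)) *\<^sub>R alpha j)"
proof -
  obtain k where k: "2 * (b \<bullet> alpha i) / (alpha i \<bullet> alpha i) = of_int k"
    using cartan_int[OF simple_root[OF i] b] by (blast elim: Ints_cases)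
  have "(\<Sum>j<n. of_int (c j - (if j = i then k else 0)) *\<^sub>R alpha j)
      = (\<Sum>j<n. of_int (c j) *\<^sub>R alpha j) - (\<Sum>j<n. if j = i then of_int k *\<^sub>R alpha j else 0)"
    unfolding sum_subtractf[symmetric] by (rule sum.cong) (auto simp: scaleR_diff_left)
  also have "\<dots> = b - of_int k *\<^sub>R alpha i" using i c by simp
  also have "\<dots> = refl (alpha i) b" unfolding refl_def k ..
  finally show ?thesis by metis
qed

lemma refl_simple_Pos:
  assumes i: "i < n" and b: "b \<in> Pos" "b \<noteq> alpha i"
  shows "refl (alpha i) b \<in> Pos - {alpha i}"
proof -
  obtain c where bP: "b \<in> Phi" and c: "b = (\<Sum>j<n. of_int (c j) *\<^sub>R alpha j)" "\<forall>j<n. c j \<ge> 0"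
    using b unfolding Pos_def by blast
  obtain j where j: "j < n" "j \<noteq> i" "c j > 0" using Pos_other_coord[OF i bP b(2) c] by blast
  obtain k where k: "refl (alpha i) b = (\<Sum>j<n. of_int (c j - (if j = i then k else 0)) *\<^sub>R alpha j)"
    using refl_simple_coords[OF i bP c(1)] by blast
  have pos: "refl (alpha i) b \<in> Pos"
    by (rule Pos_of_positive_coord[OF refl_root[OF simple_root[OF i] bP] k j(1)]) (use j in simp)
  have anz: "alpha i \<noteq> 0" using simple_root[OF i] zero_not_root by auto
  have "refl (alpha i) b \<noteq> alpha i"
  proof
    assume "refl (alpha i) b = alpha i"
    then have "b = - alpha i" using refl_refl[OF anz, of b] refl_self[OF anz] by metis
    then show False using neg_Pos[OF b(1)] simple_Pos[OF i] Pos_Neg_disjoint by auto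
  qed
  then show ?thesis using pos by simp
qed

lemma refl_simple_image_Pos:
  assumes i: "i < n" shows "refl (alpha i) ` Pos = (Pos - {alpha i}) \<union> {- alpha i}"
proof -
  have anz: "alpha i \<noteq> 0" using simple_root[OF i] zero_not_root by auto
  have stable: "refl (alpha i) ` (Pos - {alpha i}) = Pos - {alpha i}"
  proof
    show "refl (alpha i) ` (Pos - {alpha i}) \<subseteq> Pos - {alpha i}"
      using refl_simple_Pos[OF i] by auto
    show "Pos - {alpha i} \<subseteq> refl (alpha i) ` (Pos - {alpha i})"
    proof
      fix b assume "b \<in> Pos - {alpha i}"
      then have "refl (alpha i) b \<in> Pos - {alpha i}" using refl_simple_Pos[OF i] by blast
      then show "b \<in> refl (alpha i) ` (Pos - {alpha i})"
        using refl_refl[OF anz, of b] by (metis imageI)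
    qed
  qed
  have "refl (alpha i) ` Pos = insert (refl (alpha i) (alpha i)) (refl (alpha i) ` (Pos - {alpha i}))"
    by (metis simple_Pos[OF i] image_insert insert_Diff)
  then show ?thesis unfolding stable refl_self[OF anz] by simp
qed

lemma act_add: "s \<in> W \<Longrightarrow> act s (a + b) = act s a + act s b"
  and act_mult: "s \<in> W \<Longrightarrow> act s (a * b) = act s a * act s b"
  and act_one: "s \<in> W \<Longrightarrow> act s 1 = 1"
  using action unfolding weyl_action_def by auto

lemma act_zero: "s \<in> W \<Longrightarrow> act s 0 = 0"
  using act_add[of s 0 0] by simp

lemma act_neg: "s \<in> W \<Longrightarrow> act s (- a) = - act s a"
  using act_add[of s a "- a"] act_zero[of s] by (simp add: eq_neg_iff_add_eq_0 add.commute)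

lemma act_prod: "s \<in> W \<Longrightarrow> act s (\<Prod>b\<in>A. f b) = (\<Prod>b\<in>A. act s (f b))"
  by (induction A rule: infinite_finite_induct) (auto simp: act_one act_mult)

lemma act_prod_mset: "s \<in> W \<Longrightarrow> act s (\<Prod>mu\<in>#m. f mu) = (\<Prod>mu\<in>#m. act s (f mu))"
  by (induction m) (auto simp: act_one act_mult)

lemma act_uinv: "s \<in> W \<Longrightarrow> a * b = 1 \<Longrightarrow> act s (uinv a) = uinv (act s a)"
  by (metis act_mult act_one uinv_right uinv_unique)

lemma x_equivariant: "s \<in> W \<Longrightarrow> b \<in> Phi \<Longrightarrow> act s (x b) = x (s b)"
  using admissible cartan_int simple_root
  unfolding admissible_x_def weight_lattice_def by auto

lemma x_unit: "b \<in> Phi \<Longrightarrow> x b * uinv (x b) = 1"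
  using admissible uinv_right unfolding admissible_x_def by metis

lemma theta_equivariant: "s \<in> W \<Longrightarrow> b \<in> Phi \<Longrightarrow> act s (theta x b) = theta x (s b)"
  unfolding theta_def
  using act_neg act_mult act_uinv[OF _ x_unit] x_equivariant neg_root weyl_neg by simp

lemma theta_times_neg: "b \<in> Phi \<Longrightarrow> theta x b * theta x (- b) = 1"
proof -
  assume b: "b \<in> Phi"
  have "theta x b * theta x (- b) = (x b * uinv (x b)) * (x (- b) * uinv (x (- b)))"
    unfolding theta_def by (simp add: algebra_simps)
  then show ?thesis using x_unit[OF b] x_unit[OF neg_root[OF b]] by simp
qed

lemma theta_word_Cons:
  assumes i: "i < n" and I: "set I \<subseteq> {..<n}"
  shows "theta_word x alpha (i # I) = theta x (alpha i) * act (refl (alpha i)) (theta_word x alpha I)"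
proof -
  have s: "refl (alpha i) \<in> W" using simple_refl_in_weyl[OF i] .
  have "theta_word x alpha (i # I)
      = theta x (beta alpha (i # I) 0) * (\<Prod>k<length I. theta x (beta alpha (i # I) (Suc k)))"
    unfolding theta_word_def length_Cons by (rule prod.lessThan_Suc_shift)
  also have "(\<Prod>k<length I. theta x (beta alpha (i # I) (Suc k)))
      = act (refl (alpha i)) (theta_word x alpha I)"
    unfolding theta_word_def act_prod[OF s] beta_Suc
    using theta_equivariant[OF s beta_root[OF I]] by simp
  finally show ?thesis unfolding beta_0 .
qed

definition theta_inversions :: "('v \<Rightarrow> 'v) \<Rightarrow> 'q" where
  "theta_inversions w = (\<Prod>b\<in>Pos \<inter> w ` Neg. theta x b)"

(* Passing from w to s_i w either adds alpha_i to the inversion set, or removes -alpha_i;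
   in both cases the cocycle rule below holds since theta(alpha_i) theta(-alpha_i) = 1. *)
lemma theta_inversions_step:
  assumes i: "i < n" and w: "w \<in> W"
  shows "theta_inversions (refl (alpha i) \<circ> w)
       = theta x (alpha i) * act (refl (alpha i)) (theta_inversions w)"
proof -
  define a s where "a = alpha i" and "s = refl a"
  define M where "M = (s \<circ> w) ` Neg"
  define Q where "Q = (Pos - {a}) \<inter> M"
  have aP: "a \<in> Phi" and aPos: "a \<in> Pos" using simple_root[OF i] simple_Pos[OF i] a_def by auto
  have sW: "s \<in> W" using refl_in_weyl[OF aP] s_def by simp
  have swW: "s \<circ> w \<in> W" using weyl_comp[OF sW w] .
  have inj_s: "inj s" using weyl_props[OF sW] by blast
  have finQ: "finite Q" unfolding Q_def using roots_finite Pos_roots finite_subset by blast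
  have "act s (theta_inversions w) = (\<Prod>b\<in>Pos \<inter> w ` Neg. theta x (s b))"
    unfolding theta_inversions_def act_prod[OF sW]
    using theta_equivariant[OF sW] Pos_roots by (intro prod.cong) auto
  also have "\<dots> = (\<Prod>b\<in>s ` (Pos \<inter> w ` Neg). theta x b)"
    using prod.reindex[of s "Pos \<inter> w ` Neg" "theta x"] inj_s by (simp add: inj_on_def)
  also have "s ` (Pos \<inter> w ` Neg) = ((Pos - {a}) \<union> {- a}) \<inter> M"
    unfolding M_def image_comp[symmetric] image_Int[OF inj_s]
    using refl_simple_image_Pos[OF i] s_def a_def by simp
  finally have act_eq: "act s (theta_inversions w) = (\<Prod>b\<in>((Pos - {a}) \<union> {- a}) \<inter> M. theta x b)" .
  have sw_eq: "theta_inversions (s \<circ> w) = (\<Prod>b\<in>Pos \<inter> M. theta x b)"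
    unfolding theta_inversions_def M_def ..
  have na_notin_Q: "- a \<notin> Q" "a \<notin> Q"
    using neg_Pos[OF aPos] Pos_Neg_disjoint unfolding Q_def by auto
  have M_root: "a \<in> M \<longleftrightarrow> - a \<notin> M"
  proof -
    obtain g where g: "g \<in> Phi" "a = (s \<circ> w) g" using aP weyl_props[OF swW] by blast
    have inj_sw: "inj (s \<circ> w)" using weyl_props[OF swW] by blast
    have "- a = (s \<circ> w) (- g)" using g weyl_neg[OF swW] by simp
    then have "a \<in> M \<longleftrightarrow> g \<in> Neg" and "- a \<in> M \<longleftrightarrow> - g \<in> Neg"
      unfolding M_def g(2) by (simp_all only: inj_image_mem_iff[OF inj_sw])
    moreover have "g \<in> Neg \<longleftrightarrow> - g \<notin> Neg"
      using g roots_Pos_Neg Pos_Neg_disjoint neg_Pos neg_Neg by blast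
    ultimately show ?thesis by blast
  qed
  show ?thesis
  proof (cases "a \<in> M")
    case True
    then have "((Pos - {a}) \<union> {- a}) \<inter> M = Q" and "Pos \<inter> M = insert a Q"
      using M_root aPos unfolding Q_def by auto
    then show ?thesis using act_eq sw_eq finQ na_notin_Q unfolding s_def a_def by simp
  next
    case False
    then have "((Pos - {a}) \<union> {- a}) \<inter> M = insert (- a) Q" and "Pos \<inter> M = Q"
      using M_root unfolding Q_def by auto
    then have "theta x a * act s (theta_inversions w)
        = (theta x a * theta x (- a)) * theta_inversions (s \<circ> w)"
      using act_eq sw_eq finQ na_notin_Q by (simp add: mult.assoc)
    then show ?thesis using theta_times_neg[OF aP] unfolding s_def a_def by simp
  qed
qed

lemma theta_word_inversions:
  "set I \<subseteq> {..<n} \<Longrightarrow> theta_word x alpha I = theta_inversions (word_elt alpha I)"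
proof (induction I)
  case Nil
  then show ?case
    unfolding theta_word_def theta_inversions_def word_elt_Nil using Pos_Neg_disjoint by simp
next
  case (Cons i I)
  then have i: "i < n" and I: "set I \<subseteq> {..<n}" by auto
  show ?case
    unfolding theta_word_Cons[OF i I] Cons.IH[OF I] word_elt_Cons
    by (rule theta_inversions_step[OF i word_elt_weyl[OF I], symmetric])
qed

(* Left multiplication by delta_s in Q_W:  delta_s (sum_v g_v delta_v) = sum_v s(g_v) delta_{s v}. *)
definition delta_mult :: "('v \<Rightarrow> 'v) \<Rightarrow> ('v, 'q) qw \<Rightarrow> ('v, 'q) qw" where
  "delta_mult s g u = (\<Sum>v\<in>W. if s \<circ> v = u then act s (g v) else 0)"

lemma qw_mult_add_left:
  "qw_mult Phi act (\<lambda>w. f1 w + f2 w) g u = qw_mult Phi act f1 g u + qw_mult Phi act f2 g u"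
  unfolding qw_mult_def sum.distrib[symmetric] by (intro sum.cong refl) (auto simp: distrib_right)

lemma qw_mult_delta_left:
  assumes s: "s \<in> W" shows "qw_mult Phi act (\<lambda>w. c * delta s w) g u = c * delta_mult s g u"
proof -
  have "qw_mult Phi act (\<lambda>w. c * delta s w) g u = (\<Sum>w\<in>W. if w = s then c * delta_mult s g u else 0)"
    unfolding qw_mult_def
  proof (rule sum.cong[OF refl])
    fix w
    show "(\<Sum>v\<in>W. if w \<circ> v = u then c * delta s w * act w (g v) else 0)
        = (if w = s then c * delta_mult s g u else 0)"
      by (cases "w = s") (simp_all add: delta_def delta_mult_def sum_distrib_left if_distrib cong: if_cong)
  qed
  then show ?thesis using s weyl_finite by simp
qed

lemma delta_mult_scal: "s \<in> W \<Longrightarrow> delta_mult s (\<lambda>u. c * g u) u = act s c * delta_mult s g u"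
  unfolding delta_mult_def sum_distrib_left by (intro sum.cong refl) (auto simp: act_mult act_zero)

lemma delta_mult_delta: "s \<in> W \<Longrightarrow> w \<in> W \<Longrightarrow> delta_mult s (delta w) u = delta (s \<circ> w) u"
proof -
  assume s: "s \<in> W" and w: "w \<in> W"
  have "delta_mult s (delta w) u = (\<Sum>v\<in>W. if v = w then (if s \<circ> w = u then 1 else 0) else 0)"
    unfolding delta_mult_def delta_def by (intro sum.cong refl) (auto simp: act_one[OF s] act_zero[OF s])
  also have "\<dots> = delta (s \<circ> w) u" using w weyl_finite by (auto simp: delta_def)
  finally show ?thesis .
qed

lemma delta_mult_add:
  "s \<in> W \<Longrightarrow> delta_mult s (\<lambda>u. g1 u + g2 u) u = delta_mult s g1 u + delta_mult s g2 u"
  unfolding delta_mult_def sum.distrib[symmetric] by (intro sum.cong refl) (auto simp: act_add)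

lemma delta_mult_sum_list:
  "s \<in> W \<Longrightarrow> delta_mult s (\<lambda>u. \<Sum>p\<leftarrow>A. f p u) u = (\<Sum>p\<leftarrow>A. delta_mult s (f p) u)"
proof (induction A)
  case Nil then show ?case using act_zero[OF Nil] unfolding delta_mult_def by (simp cong: if_cong)
next
  case (Cons p A)
  then show ?case using delta_mult_add[OF Cons.prems, of "f p" "\<lambda>u. \<Sum>p\<leftarrow>A. f p u" u] by simp
qed

definition root_monomials :: "('v, 'q) qwl \<Rightarrow> bool" where
  "root_monomials A \<longleftrightarrow> (\<forall>p\<in>set A. set_mset (fst p) \<subseteq> Phi)"

definition msmap :: "('v \<Rightarrow> 'v) \<Rightarrow> ('v, 'q) qwl \<Rightarrow> ('v, 'q) qwl" where
  "msmap s A = map (\<lambda>p. (image_mset s (fst p), snd p)) A"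

lemma root_monomials_tmult:
  "root_monomials A \<Longrightarrow> root_monomials B \<Longrightarrow> root_monomials (tmult Phi act A B)"
  unfolding root_monomials_def tmult_def by auto

lemma root_monomials_msmap: "s \<in> W \<Longrightarrow> root_monomials A \<Longrightarrow> root_monomials (msmap s A)"
  unfolding root_monomials_def msmap_def using weyl_root by auto

lemma msmap_tprod: "tprod Phi act (map (msmap s) As) = msmap s (tprod Phi act As)"
  by (induction As) (simp_all add: tprod_def msmap_def tmult_def map_concat comp_def)

lemma ev_monomial_msmap:
  assumes s: "s \<in> W" and m: "set_mset m \<subseteq> Phi"
  shows "(\<Prod>mu\<in>#image_mset s m. x (- mu)) = act s (\<Prod>mu\<in>#m. x (- mu))"
proof -
  have "(\<Prod>mu\<in>#image_mset s m. x (- mu)) = (\<Prod>mu\<in>#m. act s (x (- mu)))"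
    unfolding image_mset.compositionality comp_def
    using m x_equivariant[OF s neg_root] weyl_neg[OF s]
    by (intro arg_cong[where f=prod_mset] image_mset_cong) auto
  then show ?thesis using act_prod_mset[OF s, of "\<lambda>mu. x (- mu)" m] by simp
qed

definition root_poly :: "(nat \<Rightarrow> 'v \<Rightarrow> ('v, 'q) qwl) \<Rightarrow> nat list \<Rightarrow> ('v, 'q) qwl" where
  "root_poly h I = tprod Phi act (map (\<lambda>k. h (I ! k) (beta alpha I k)) [0..<length I])"

lemma root_poly_Cons:
  assumes h: "\<And>j l. h j (refl (alpha i) l) = msmap (refl (alpha i)) (h j l)"
  shows "root_poly h (i # I) = tmult Phi act (h i (alpha i)) (msmap (refl (alpha i)) (root_poly h I))"
proof -
  have "[0..<length (i # I)] = 0 # map Suc [0..<length I]"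
    by (simp add: map_Suc_upt upt_conv_Cons del: upt_Suc)
  then have "map (\<lambda>k. h ((i # I) ! k) (beta alpha (i # I) k)) [0..<length (i # I)]
      = h i (alpha i) # map (msmap (refl (alpha i))) (map (\<lambda>k. h (I ! k) (beta alpha I k)) [0..<length I])"
    by (simp add: beta_0 beta_Suc h del: upt_Suc)
  moreover have "tprod Phi act (a # As) = tmult Phi act a (tprod Phi act As)" for a As
    unfolding tprod_def by simp
  ultimately show ?thesis unfolding root_poly_def by (simp only: msmap_tprod)
qed

lemma root_poly_ev:
  fixes h :: "nat \<Rightarrow> 'v \<Rightarrow> ('v, 'q) qwl" and c :: "nat \<Rightarrow> 'q" and f :: "nat list \<Rightarrow> 'q"
  assumes h_refl: "\<And>j a l. h j (refl a l) = msmap (refl a) (h j l)"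
    and h_roots: "\<And>j l. l \<in> Phi \<Longrightarrow> root_monomials (h j l)"
    and h_ev: "\<And>i A. i < n \<Longrightarrow> root_monomials A \<Longrightarrow>
        ev x (tmult Phi act (h i (alpha i)) (msmap (refl (alpha i)) A))
          = (\<lambda>u. c i * delta_mult (refl (alpha i)) (ev x A) u)"
    and f_Nil: "f [] = 1"
    and f_Cons: "\<And>i I. i < n \<Longrightarrow> set I \<subseteq> {..<n} \<Longrightarrow> f (i # I) = c i * act (refl (alpha i)) (f I)"
  shows "set I \<subseteq> {..<n} \<Longrightarrow>
    root_monomials (root_poly h I) \<and> ev x (root_poly h I) = scal (f I) (delta (word_elt alpha I))"
proof (induction I)
  case Nil
  show ?case
    unfolding root_poly_def tprod_def ev_def word_elt_Nil root_monomials_def scal_def f_Nil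
    by (simp add: id_def)
next
  case (Cons i I)
  then have i: "i < n" and I: "set I \<subseteq> {..<n}" by auto
  define s where "s = refl (alpha i)"
  have sW: "s \<in> W" using simple_refl_in_weyl[OF i] s_def by simp
  have R: "root_poly h (i # I) = tmult Phi act (h i (alpha i)) (msmap s (root_poly h I))"
    unfolding s_def by (rule root_poly_Cons) (rule h_refl)
  note IH = Cons.IH[OF I]
  have "root_monomials (root_poly h (i # I))"
    unfolding R using root_monomials_tmult h_roots[OF simple_root[OF i]]
      root_monomials_msmap[OF sW] IH by blast
  moreover have "ev x (root_poly h (i # I)) u = scal (f (i # I)) (delta (word_elt alpha (i # I))) u" for u
  proof -
    have "ev x (root_poly h (i # I)) u = c i * delta_mult s (\<lambda>u. f I * delta (word_elt alpha I) u) u"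
      unfolding R s_def using h_ev[OF i] IH by (simp add: scal_def)
    also have "\<dots> = c i * act s (f I) * delta (s \<circ> word_elt alpha I) u"
      by (simp add: delta_mult_scal[OF sW] delta_mult_delta[OF sW word_elt_weyl[OF I]])
    finally show ?thesis
      unfolding scal_def f_Cons[OF i I] word_elt_Cons s_def by simp
  qed
  ultimately show ?case by blast
qed

lemma ev_tmult_pair: "ev x (tmult Phi act [a1, a2] B) u =
  (\<Sum>b\<leftarrow>B. (\<Prod>mu\<in>#fst a1 + fst b. x (- mu)) * qw_mult Phi act (snd a1) (snd b) u
          + (\<Prod>mu\<in>#fst a2 + fst b. x (- mu)) * qw_mult Phi act (snd a2) (snd b) u)"
  unfolding ev_def tmult_def by (simp add: sum_list_addf comp_def)

lemma ev_hX_term: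
  assumes i: "i < n" and m: "set_mset m \<subseteq> Phi"
  defines "s \<equiv> refl (alpha i)"
  shows "(\<Prod>mu\<in>#{#} + image_mset s m. x (- mu)) * qw_mult Phi act (delta id) b u
       + (\<Prod>mu\<in>#{#- alpha i#} + image_mset s m. x (- mu)) * qw_mult Phi act (demX alpha x i) b u
       = delta_mult s (\<lambda>u. (\<Prod>mu\<in>#m. x (- mu)) * b u) u"
proof -
  have sW: "s \<in> W" using simple_refl_in_weyl[OF i] s_def by simp
  define P where "P = act s (\<Prod>mu\<in>#m. x (- mu))"
  define e where "e = x (alpha i) * uinv (x (alpha i))"
  have e: "e = 1" using x_unit[OF simple_root[OF i]] e_def by simp
  have P1: "(\<Prod>mu\<in>#{#} + image_mset s m. x (- mu)) = P"
    and P2: "(\<Prod>mu\<in>#{#- alpha i#} + image_mset s m. x (- mu)) = x (alpha i) * P"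
    using ev_monomial_msmap[OF sW m] P_def by simp_all
  have Q1: "qw_mult Phi act (delta id) b u = delta_mult id b u"
    using qw_mult_delta_left[OF weyl_group.id_in, of 1] by simp
  have demX_eq: "demX alpha x i = (\<lambda>w. uinv (x (alpha i)) * delta s w + (- uinv (x (alpha i))) * delta id w)"
    unfolding demX_def scal_def s_def by (auto simp: algebra_simps)
  have Q2: "qw_mult Phi act (demX alpha x i) b u
      = uinv (x (alpha i)) * delta_mult s b u + (- uinv (x (alpha i))) * delta_mult id b u"
    unfolding demX_eq qw_mult_add_left qw_mult_delta_left[OF sW] qw_mult_delta_left[OF weyl_group.id_in] ..
  have R: "delta_mult s (\<lambda>u. (\<Prod>mu\<in>#m. x (- mu)) * b u) u = P * delta_mult s b u"
    unfolding P_def by (rule delta_mult_scal[OF sW])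
  have "P * delta_mult id b u + x (alpha i) * P
        * (uinv (x (alpha i)) * delta_mult s b u + (- uinv (x (alpha i))) * delta_mult id b u)
      = P * delta_mult id b u + e * (P * delta_mult s b u) - e * (P * delta_mult id b u)"
    unfolding e_def by (simp add: algebra_simps)
  also have "\<dots> = P * delta_mult s b u" using e by simp
  finally show ?thesis unfolding P1 P2 Q1 Q2 R .
qed

lemma ev_hY_term:
  assumes i: "i < n" and m: "set_mset m \<subseteq> Phi"
  defines "s \<equiv> refl (alpha i)"
  shows "(\<Prod>mu\<in>#{#} + image_mset s m. x (- mu)) * qw_mult Phi act (delta id) b u
       + (\<Prod>mu\<in>#{#alpha i#} + image_mset s m. x (- mu)) * qw_mult Phi act (\<lambda>u. - ppY alpha x i u) b u
       = theta x (alpha i) * delta_mult s (\<lambda>u. (\<Prod>mu\<in>#m. x (- mu)) * b u) u"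
proof -
  have sW: "s \<in> W" using simple_refl_in_weyl[OF i] s_def by simp
  define P where "P = act s (\<Prod>mu\<in>#m. x (- mu))"
  define e where "e = x (- alpha i) * uinv (x (- alpha i))"
  have e: "e = 1" using x_unit[OF neg_root[OF simple_root[OF i]]] e_def by simp
  have P1: "(\<Prod>mu\<in>#{#} + image_mset s m. x (- mu)) = P"
    and P2: "(\<Prod>mu\<in>#{#alpha i#} + image_mset s m. x (- mu)) = x (- alpha i) * P"
    using ev_monomial_msmap[OF sW m] P_def by simp_all
  have Q1: "qw_mult Phi act (delta id) b u = delta_mult id b u"
    using qw_mult_delta_left[OF weyl_group.id_in, of 1] by simp
  have ppY_eq: "(\<lambda>u. - ppY alpha x i u)
      = (\<lambda>w. (- uinv (x (- alpha i))) * delta id w + (- uinv (x (alpha i))) * delta s w)"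
    unfolding ppY_def s_def by (auto simp: algebra_simps)
  have Q2: "qw_mult Phi act (\<lambda>u. - ppY alpha x i u) b u
      = (- uinv (x (- alpha i))) * delta_mult id b u + (- uinv (x (alpha i))) * delta_mult s b u"
    unfolding ppY_eq qw_mult_add_left qw_mult_delta_left[OF sW] qw_mult_delta_left[OF weyl_group.id_in] ..
  have R: "delta_mult s (\<lambda>u. (\<Prod>mu\<in>#m. x (- mu)) * b u) u = P * delta_mult s b u"
    unfolding P_def by (rule delta_mult_scal[OF sW])
  have "P * delta_mult id b u + x (- alpha i) * P
        * ((- uinv (x (- alpha i))) * delta_mult id b u + (- uinv (x (alpha i))) * delta_mult s b u)
      = P * delta_mult id b u - e * (P * delta_mult id b u) + theta x (alpha i) * (P * delta_mult s b u)"
    unfolding e_def theta_def by (simp add: algebra_simps)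
  also have "\<dots> = theta x (alpha i) * (P * delta_mult s b u)" using e by simp
  finally show ?thesis unfolding P1 P2 Q1 Q2 R .
qed

lemma ev_hX_step:
  assumes i: "i < n" and A: "root_monomials A"
  shows "ev x (tmult Phi act (hX alpha x i (alpha i)) (msmap (refl (alpha i)) A))
       = (\<lambda>u. delta_mult (refl (alpha i)) (ev x A) u)"
proof
  fix u
  have "ev x (tmult Phi act (hX alpha x i (alpha i)) (msmap (refl (alpha i)) A)) u
      = (\<Sum>p\<leftarrow>A. delta_mult (refl (alpha i)) (\<lambda>u. (\<Prod>mu\<in>#fst p. x (- mu)) * snd p u) u)"
    unfolding hX_def ev_tmult_pair msmap_def
    using ev_hX_term[OF i] A unfolding root_monomials_def
    by (simp add: comp_def del: add_mset_add_single cong: map_cong)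
  then show "ev x (tmult Phi act (hX alpha x i (alpha i)) (msmap (refl (alpha i)) A)) u
      = delta_mult (refl (alpha i)) (ev x A) u"
    unfolding ev_def delta_mult_sum_list[OF simple_refl_in_weyl[OF i]] .
qed

lemma ev_hY_step:
  assumes i: "i < n" and A: "root_monomials A"
  shows "ev x (tmult Phi act (hY alpha x i (alpha i)) (msmap (refl (alpha i)) A))
       = (\<lambda>u. theta x (alpha i) * delta_mult (refl (alpha i)) (ev x A) u)"
proof
  fix u
  have "ev x (tmult Phi act (hY alpha x i (alpha i)) (msmap (refl (alpha i)) A)) u
      = (\<Sum>p\<leftarrow>A. theta x (alpha i) * delta_mult (refl (alpha i)) (\<lambda>u. (\<Prod>mu\<in>#fst p. x (- mu)) * snd p u) u)"
    unfolding hY_def ev_tmult_pair msmap_def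
    using ev_hY_term[OF i] A unfolding root_monomials_def
    by (simp add: comp_def del: add_mset_add_single cong: map_cong)
  then show "ev x (tmult Phi act (hY alpha x i (alpha i)) (msmap (refl (alpha i)) A)) u
      = theta x (alpha i) * delta_mult (refl (alpha i)) (ev x A) u"
    unfolding ev_def delta_mult_sum_list[OF simple_refl_in_weyl[OF i]] by (simp add: sum_list_const_mult)
qed

lemma root_polyX_ev:
  assumes I: "set I \<subseteq> {..<n}" shows "ev x (root_polyX Phi alpha act x I) = delta (word_elt alpha I)"
proof -
  have "root_monomials (root_poly (hX alpha x) I)
      \<and> ev x (root_poly (hX alpha x) I) = scal 1 (delta (word_elt alpha I))"
  proof (rule root_poly_ev[where c="\<lambda>_. 1" and f="\<lambda>_. 1", OF _ _ _ _ _ I])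
    show "hX alpha x j (refl a l) = msmap (refl a) (hX alpha x j l)" for j a l
      unfolding hX_def msmap_def by (simp add: refl_neg)
    show "root_monomials (hX alpha x j l)" if "l \<in> Phi" for j l
      using neg_root[OF that] unfolding hX_def root_monomials_def by simp
    show "ev x (tmult Phi act (hX alpha x i (alpha i)) (msmap (refl (alpha i)) A))
        = (\<lambda>u. 1 * delta_mult (refl (alpha i)) (ev x A) u)" if "i < n" "root_monomials A" for i A
      using ev_hX_step[OF that] by simp
    show "(1::'q) = 1 * act (refl (alpha i)) 1" if "i < n" for i
      using act_one[OF simple_refl_in_weyl[OF that]] by simp
  qed simp
  then show ?thesis unfolding root_polyX_def root_poly_def scal_def by simp
qed

lemma root_polyY_ev:
  assumes I: "set I \<subseteq> {..<n}"
  shows "ev x (root_polyY Phi alpha act x I) = scal (theta_word x alpha I) (delta (word_elt alpha I))"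
proof -
  have "root_monomials (root_poly (hY alpha x) I)
      \<and> ev x (root_poly (hY alpha x) I) = scal (theta_word x alpha I) (delta (word_elt alpha I))"
  proof (rule root_poly_ev[where c="\<lambda>i. theta x (alpha i)", OF _ _ _ _ _ I])
    show "hY alpha x j (refl a l) = msmap (refl a) (hY alpha x j l)" for j a l
      unfolding hY_def msmap_def by simp
    show "root_monomials (hY alpha x j l)" if "l \<in> Phi" for j l
      using that unfolding hY_def root_monomials_def by simp
    show "ev x (tmult Phi act (hY alpha x i (alpha i)) (msmap (refl (alpha i)) A))
        = (\<lambda>u. theta x (alpha i) * delta_mult (refl (alpha i)) (ev x A) u)"
      if "i < n" "root_monomials A" for i A
      using ev_hY_step[OF that] .
    show "theta_word x alpha [] = 1" unfolding theta_word_def by simp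
    show "theta_word x alpha (i # J) = theta x (alpha i) * act (refl (alpha i)) (theta_word x alpha J)"
      if "i < n" "set J \<subseteq> {..<n}" for i J
      using theta_word_Cons[OF that] .
  qed
  then show ?thesis unfolding root_polyY_def root_poly_def by simp
qed

end

theorem lemma3p2:
  fixes Phi :: "'v::euclidean_space set" and n :: nat and alpha :: "nat \<Rightarrow> 'v"
    and act :: "('v \<Rightarrow> 'v) \<Rightarrow> 'q::comm_ring_1 \<Rightarrow> 'q" and x :: "'v \<Rightarrow> 'q"
    and w :: "'v \<Rightarrow> 'v" and I :: "nat list"
  assumes "root_system Phi" and "simple_roots Phi n alpha"
    and "weyl_action Phi act" and "admissible_x Phi n alpha act x"
    and "w \<in> weyl_group Phi" and "reduced_word n alpha w I"
  shows "ev x (root_polyX Phi alpha act x I) = delta w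
    \<and> ev x (root_polyY Phi alpha act x I) = scal (theta_word x alpha I) (delta w)
    \<and> (\<forall>J. reduced_word n alpha w J \<longrightarrow> theta_word x alpha J = theta_word x alpha I)"
proof -
  interpret weyl_setting Phi n alpha act x
    using assms(1-4) by unfold_locales
  have I: "set I \<subseteq> {..<n}" and w: "word_elt alpha I = w"
    using assms(6) unfolding reduced_word_def by auto
  (* theta_J is the inversion product of s_J = w, whatever the reduced word J *)
  have "theta_word x alpha J = theta_word x alpha I" if "reduced_word n alpha w J" for J
    using that theta_word_inversions[of J] theta_word_inversions[OF I] w
    unfolding reduced_word_def by simp
  then show ?thesis using root_polyX_ev[OF I] root_polyY_ev[OF I] w by simp
qed

end
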